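(* For positive integers $m\le k\le n$, define $$g(m,n,k)=\max_y\Big\{\sum_{\tau=0}^{m}\frac{\binom{n-m}{k-\tau}}{(n-m)^{m-\tau}\binom{n-m}{k-m}}\cdot\frac{\binom{m}{\tau}}{m^{\tau}}(k-y)^{m-\tau}y^{\tau}:\ \frac{mk}{n}\le y\le m\Big\}.$$ Then for any $n\ge k\ge m$, $$[g(m,n,k)]^{1/m}\le \lim_{t\to\infty}[g(m,t,k)]^{1/m}\le \min\Big\{e,\ 1+\frac{k}{k-m+1}\Big\}.$$
   Context: Binomial coefficients $\binom{a}{b}$ are $0$ when $b>a$ or $b<0$; the limit is over integers $t\to\infty$. *)

theory Defs
  imports Complex_Main
begin

definition gterm :: "nat \<Rightarrow> nat \<Rightarrow> nat \<Rightarrow> real \<Rightarrow> real" where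
  "gterm m n k y = (\<Sum>\<tau> = 0..m.
     real ((n - m) choose (k - \<tau>)) / (real (n - m) ^ (m - \<tau>) * real ((n - m) choose (k - m)))
     * (real (m choose \<tau>) / real m ^ \<tau>) * (real k - y) ^ (m - \<tau>) * y ^ \<tau>)"

definition g :: "nat \<Rightarrow> nat \<Rightarrow> nat \<Rightarrow> real" where
  "g m n k = (SUP y \<in> {real m * real k / real n .. real m}. gterm m n k y)"

end

theory Submission
  imports Defs "HOL-Real_Asymp.Real_Asymp"
begin

text \<open>With N = t - m and a = k - m, the coefficient of the \<tau>-th summand of g(m,t,k) is
  C(N, a+j) / (N^j C(N, a)) = a!/(a+j)! \<cdot> \<Prod>i<j. (1 - (a+i)/N),  j = m - \<tau>,
  which is bounded by and tends to a!/(a+j)!. So every summand is dominated by its limit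
  polynomial h, whence g(m,t,k) \<le> max h on [0,m]; and because the intervals [mk/t, m]
  exhaust (0, m], g(m,t,k) converges to that maximum. Finally h(y) \<le> e^m follows from
  a!/(a+j)! \<cdot> (a+u)^j \<le> e^u with u = m - y, and h(y) \<le> (1 + k/(k-m+1))^m from
  a!/(a+j)! \<le> (a+1)^-j; both estimates collapse the sum by the binomial theorem.\<close>

lemma binomial_Suc_mult: "(N choose Suc r) * Suc r = (N - r) * (N choose r)"
  by (metis binomial_absorption binomial_absorb_comp mult.commute)

lemma of_nat_binomial_add_mult_fact:
  assumes "a + j \<le> N"
  shows "real (N choose (a + j)) * fact (a + j)
           = real (N choose a) * fact a * (\<Prod>i<j. real N - real (a + i))"
  using assms
proof (induction j)
  case 0
  then show ?case by simp
next
  case (Suc j)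
  have le: "a + j \<le> N" using Suc.prems by simp
  have "real (N choose (a + Suc j)) * fact (a + Suc j)
      = real ((N choose Suc (a + j)) * Suc (a + j)) * fact (a + j)"
    by (simp only: add_Suc_right fact_Suc of_nat_mult mult.assoc)
  also have "\<dots> = (real N - real (a + j)) * (real (N choose (a + j)) * fact (a + j))"
    using le by (simp only: binomial_Suc_mult) (simp add: of_nat_diff)
  also have "\<dots> = real (N choose a) * fact a * (\<Prod>i<Suc j. real N - real (a + i))"
    using Suc.IH le by (simp add: prod.lessThan_Suc algebra_simps)
  finally show ?case .
qed

lemma binomial_ratio_eq_prod:
  assumes "a + j \<le> N"
  shows "real (N choose (a + j)) / (real N ^ j * real (N choose a))
           = fact a / fact (a + j) * (\<Prod>i<j. 1 - real (a + i) / real N)"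
proof (cases "N = 0")
  case True
  then show ?thesis using assms by simp
next
  case False
  have "(\<Prod>i<j. 1 - real (a + i) / real N) = (\<Prod>i<j. (real N - real (a + i)) / real N)"
    using False by (simp add: diff_divide_distrib)
  also have "\<dots> = (\<Prod>i<j. real N - real (a + i)) / real N ^ j"
    by (simp add: prod_dividef)
  finally have "(\<Prod>i<j. 1 - real (a + i) / real N) = (\<Prod>i<j. real N - real (a + i)) / real N ^ j" .
  moreover have "real (N choose a) > 0" using assms by simp
  ultimately show ?thesis
    using of_nat_binomial_add_mult_fact[OF assms] False by (simp add: field_simps)
qed

lemma binomial_ratio_le:
  assumes "a \<le> N"
  shows "real (N choose (a + j)) / (real N ^ j * real (N choose a)) \<le> fact a / fact (a + j)"
proof (cases "a + j \<le> N")
  case False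
  then show ?thesis by (simp add: binomial_eq_0)
next
  case True
  have "(\<Prod>i<j. 1 - real (a + i) / real N) \<le> 1"
    using True by (intro prod_le_1) (auto simp: divide_le_eq)
  then show ?thesis
    unfolding binomial_ratio_eq_prod[OF True] by (intro mult_left_le) auto
qed

lemma binomial_ratio_tendsto:
  "(\<lambda>N. real (N choose (a + j)) / (real N ^ j * real (N choose a))) \<longlonglongrightarrow> fact a / fact (a + j)"
proof -
  have "(\<lambda>N. fact a / fact (a + j) * (\<Prod>i<j. 1 - real (a + i) / real N))
          \<longlonglongrightarrow> fact a / fact (a + j) * (\<Prod>i<j. 1)"
    by (intro tendsto_intros) real_asymp
  moreover have "\<forall>\<^sub>F N in sequentially. fact a / fact (a + j) * (\<Prod>i<j. 1 - real (a + i) / real N)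
                   = real (N choose (a + j)) / (real N ^ j * real (N choose a))"
    using eventually_ge_at_top[of "a + j"] by eventually_elim (simp add: binomial_ratio_eq_prod)
  ultimately show ?thesis by (simp add: tendsto_cong)
qed

lemma mult_exp_partial_sum_le:
  fixes u :: real
  assumes "0 \<le> u"
  shows "u * (\<Sum>i\<le>j. u ^ i / fact i) \<le> real (Suc j) * (\<Sum>i\<le>Suc j. u ^ i / fact i)"
proof -
  have "u * (\<Sum>i\<le>j. u ^ i / fact i) = (\<Sum>i\<le>j. real (Suc i) * (u ^ Suc i / fact (Suc i)))"
    by (simp add: sum_distrib_left field_simps del: of_nat_Suc)
  also have "\<dots> \<le> (\<Sum>i\<le>j. real (Suc j) * (u ^ Suc i / fact (Suc i)))"
    using assms by (intro sum_mono mult_right_mono) auto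
  also have "\<dots> = real (Suc j) * (\<Sum>i\<le>j. u ^ Suc i / fact (Suc i))"
    by (simp add: sum_distrib_left)
  also have "\<dots> \<le> real (Suc j) * (1 + (\<Sum>i\<le>j. u ^ Suc i / fact (Suc i)))"
    by simp
  also have "\<dots> = real (Suc j) * (\<Sum>i\<le>Suc j. u ^ i / fact i)"
    by (simp only: sum.atMost_Suc_shift) simp
  finally show ?thesis .
qed

lemma power_add_mult_fact_le_exp_partial_sum:
  fixes u :: real
  assumes "0 \<le> u"
  shows "(real a + u) ^ j * fact a \<le> fact (a + j) * (\<Sum>i\<le>j. u ^ i / fact i)"
proof (induction j)
  case 0
  then show ?case by simp
next
  case (Suc j)
  define S where "S j = (\<Sum>i\<le>j. u ^ i / fact i)" for j
  have "(real a + u) * S j \<le> real (a + Suc j) * S (Suc j)"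
  proof -
    have "u * S j \<le> real (Suc j) * S (Suc j)"
      unfolding S_def by (rule mult_exp_partial_sum_le[OF assms])
    moreover have "real a * S j \<le> real a * S (Suc j)"
      unfolding S_def using assms by (intro mult_left_mono) auto
    ultimately show ?thesis by (simp add: algebra_simps)
  qed
  then have "fact (a + j) * ((real a + u) * S j) \<le> fact (a + j) * (real (a + Suc j) * S (Suc j))"
    by (intro mult_left_mono) auto
  moreover have "(real a + u) ^ Suc j * fact a \<le> (real a + u) * (fact (a + j) * S j)"
    using Suc assms unfolding S_def by (simp add: mult.assoc mult_left_mono)
  ultimately show ?case
    unfolding S_def by (simp add: algebra_simps del: of_nat_Suc)
qed

lemma fact_ratio_mult_power_le_exp:
  fixes u :: real
  assumes "0 \<le> u"
  shows "fact a / fact (a + j) * (real a + u) ^ j \<le> exp u"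
proof -
  have "(\<Sum>i\<le>j. u ^ i / fact i) \<le> exp u"
    using sum_le_suminf[OF summable_exp_generic[of u], of "{..j}"] assms
    by (simp add: exp_def divide_inverse_commute)
  then have "(real a + u) ^ j * fact a \<le> fact (a + j) * exp u"
    using power_add_mult_fact_le_exp_partial_sum[OF assms, of a j]
    by (meson fact_ge_zero mult_left_mono order_trans)
  then show ?thesis by (simp add: field_simps)
qed

definition gterm_limit :: "nat \<Rightarrow> nat \<Rightarrow> real \<Rightarrow> real" where
  "gterm_limit m k y = (\<Sum>\<tau> = 0..m. fact (k - m) / fact (k - \<tau>)
     * (real (m choose \<tau>) / real m ^ \<tau>) * (real k - y) ^ (m - \<tau>) * y ^ \<tau>)"

lemma continuous_gterm_limit: "continuous_on A (gterm_limit m k)"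
  unfolding gterm_limit_def by (intro continuous_intros)

lemma gterm_le_gterm_limit:
  assumes "m \<le> k" "k \<le> t" "0 \<le> y" "y \<le> real m"
  shows "gterm m t k y \<le> gterm_limit m k y"
  unfolding gterm_def gterm_limit_def
proof (rule sum_mono)
  fix \<tau> assume "\<tau> \<in> {0..m}"
  then have "k - \<tau> = (k - m) + (m - \<tau>)" using assms by simp
  then have "real ((t - m) choose (k - \<tau>)) / (real (t - m) ^ (m - \<tau>) * real ((t - m) choose (k - m)))
               \<le> fact (k - m) / fact (k - \<tau>)"
    using binomial_ratio_le[of "k - m" "t - m" "m - \<tau>"] assms by simp
  then show "real ((t - m) choose (k - \<tau>)) / (real (t - m) ^ (m - \<tau>) * real ((t - m) choose (k - m)))
               * (real (m choose \<tau>) / real m ^ \<tau>) * (real k - y) ^ (m - \<tau>) * y ^ \<tau>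
             \<le> fact (k - m) / fact (k - \<tau>) * (real (m choose \<tau>) / real m ^ \<tau>) * (real k - y) ^ (m - \<tau>) * y ^ \<tau>"
    using assms by (intro mult_right_mono) auto
qed

lemma gterm_tendsto_gterm_limit:
  assumes "m \<le> k"
  shows "(\<lambda>t. gterm m t k y) \<longlonglongrightarrow> gterm_limit m k y"
  unfolding gterm_def gterm_limit_def
proof (intro tendsto_sum tendsto_mult tendsto_const)
  fix \<tau> assume "\<tau> \<in> {0..m}"
  then have "k - \<tau> = (k - m) + (m - \<tau>)" using assms by simp
  then show "(\<lambda>t. real ((t - m) choose (k - \<tau>)) / (real (t - m) ^ (m - \<tau>) * real ((t - m) choose (k - m))))
               \<longlonglongrightarrow> fact (k - m) / fact (k - \<tau>)"
    using filterlim_compose[OF binomial_ratio_tendsto filterlim_minus_const_nat_at_top] by simp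
qed

lemma gterm_limit_le_binomial:
  assumes "0 \<le> y" "0 \<le> D"
    and "\<And>\<tau>. \<tau> \<le> m \<Longrightarrow> fact (k - m) / fact (k - \<tau>) * (real k - y) ^ (m - \<tau>) \<le> D * X ^ (m - \<tau>)"
  shows "gterm_limit m k y \<le> D * (y / real m + X) ^ m"
proof -
  have "gterm_limit m k y = (\<Sum>\<tau>\<le>m. real (m choose \<tau>) * (y / real m) ^ \<tau>
                               * (fact (k - m) / fact (k - \<tau>) * (real k - y) ^ (m - \<tau>)))"
    unfolding gterm_limit_def atLeast0AtMost by (intro sum.cong refl) (simp add: power_divide field_simps)
  also have "\<dots> \<le> (\<Sum>\<tau>\<le>m. real (m choose \<tau>) * (y / real m) ^ \<tau> * (D * X ^ (m - \<tau>)))"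
    using assms by (intro sum_mono mult_left_mono) auto
  also have "\<dots> = D * (\<Sum>\<tau>\<le>m. real (m choose \<tau>) * (y / real m) ^ \<tau> * X ^ (m - \<tau>))"
    by (simp add: sum_distrib_left algebra_simps)
  also have "\<dots> = D * (y / real m + X) ^ m"
    by (simp add: binomial_ring)
  finally show ?thesis .
qed

lemma gterm_limit_le_exp:
  assumes "0 < m" "m \<le> k" "0 \<le> y" "y \<le> real m"
  shows "gterm_limit m k y \<le> exp 1 ^ m"
proof -
  have "gterm_limit m k y \<le> exp (real m - y) * (y / real m + 1) ^ m"
  proof (rule gterm_limit_le_binomial[OF assms(3)])
    fix \<tau> assume "\<tau> \<le> m"
    then have "k - \<tau> = (k - m) + (m - \<tau>)" "real k - y = real (k - m) + (real m - y)"
      using assms by (simp_all add: of_nat_diff)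
    then show "fact (k - m) / fact (k - \<tau>) * (real k - y) ^ (m - \<tau>) \<le> exp (real m - y) * 1 ^ (m - \<tau>)"
      using fact_ratio_mult_power_le_exp[of "real m - y" "k - m" "m - \<tau>"] assms by simp
  qed simp
  also have "\<dots> \<le> exp (real m - y) * exp (y / real m) ^ m"
    using assms by (intro mult_left_mono power_mono) (auto simp: add.commute[of _ 1] exp_ge_add_one_self)
  also have "\<dots> = exp 1 ^ m"
    using assms by (simp add: exp_of_nat_mult[symmetric] exp_add[symmetric])
  finally show ?thesis .
qed

lemma fact_mult_power_le_fact_add: "fact a * real (a + 1) ^ j \<le> (fact (a + j) :: real)"
proof (induction j)
  case 0
  then show ?case by simp
next
  case (Suc j)
  have "fact a * real (a + 1) ^ Suc j \<le> real (a + 1) * fact (a + j)"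
    using Suc by (simp add: mult.left_commute mult_left_mono)
  also have "\<dots> \<le> fact (a + Suc j)"
    by (simp add: mult_right_mono del: of_nat_Suc)
  finally show ?case .
qed

lemma gterm_limit_le_ratio:
  assumes "0 < m" "m \<le> k" "0 \<le> y" "y \<le> real m"
  shows "gterm_limit m k y \<le> (1 + real k / (real k - real m + 1)) ^ m"
proof -
  have km: "real k - real m + 1 = real (k - m + 1)" using assms by (simp add: of_nat_diff)
  have "gterm_limit m k y \<le> 1 * (y / real m + real k / (real k - real m + 1)) ^ m"
  proof (rule gterm_limit_le_binomial[OF assms(3)])
    fix \<tau> assume "\<tau> \<le> m"
    then have "k - \<tau> = (k - m) + (m - \<tau>)" using assms by simp
    then have "fact (k - m) / fact (k - \<tau>) \<le> 1 / real (k - m + 1) ^ (m - \<tau>)"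
      using fact_mult_power_le_fact_add[of "k - m" "m - \<tau>"] by (simp add: field_simps)
    moreover have "(real k - y) ^ (m - \<tau>) \<le> real k ^ (m - \<tau>)"
      using assms by (intro power_mono) auto
    ultimately have "fact (k - m) / fact (k - \<tau>) * (real k - y) ^ (m - \<tau>)
                       \<le> 1 / real (k - m + 1) ^ (m - \<tau>) * real k ^ (m - \<tau>)"
      using assms by (intro mult_mono) auto
    then show "fact (k - m) / fact (k - \<tau>) * (real k - y) ^ (m - \<tau>)
                 \<le> 1 * (real k / (real k - real m + 1)) ^ (m - \<tau>)"
      unfolding km by (simp add: power_divide)
  qed simp
  also have "\<dots> \<le> (1 + real k / (real k - real m + 1)) ^ m"
    using assms unfolding km mult_1 by (intro power_mono) (auto simp: divide_le_eq)
  finally show ?thesis .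
qed

lemma tendsto_SUP_shrinking_interval:
  fixes G :: "nat \<Rightarrow> real \<Rightarrow> real" and h :: "real \<Rightarrow> real"
  assumes "continuous_on {0..b} h" "0 < b"
    and c: "\<And>t. 0 \<le> c t" "c \<longlonglongrightarrow> 0"
    and G_le: "\<forall>\<^sub>F t in sequentially. \<forall>y\<in>{c t..b}. G t y \<le> h y"
    and G_tendsto: "\<And>y. y \<in> {0<..b} \<Longrightarrow> (\<lambda>t. G t y) \<longlonglongrightarrow> h y"
  shows "(\<lambda>t. SUP y\<in>{c t..b}. G t y) \<longlonglongrightarrow> (SUP y\<in>{0..b}. h y)"
proof -
  obtain z where z: "z \<in> {0..b}" "\<And>y. y \<in> {0..b} \<Longrightarrow> h y \<le> h z"
    using continuous_attains_sup[OF compact_Icc _ assms(1)] assms(2) by auto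
  have SUP_eq: "(SUP y\<in>{0..b}. h y) = h z"
    using z by (intro cSup_eq_maximum) auto
  have ev_le: "\<forall>\<^sub>F t in sequentially. c t < b \<and> (\<forall>y\<in>{c t..b}. G t y \<le> h z)"
    using order_tendstoD(2)[OF c(2) assms(2)] G_le
    by eventually_elim (use c(1) z(2) in \<open>meson atLeastAtMost_iff order_trans\<close>)
  show ?thesis
    unfolding SUP_eq
  proof (rule order_tendstoI)
    fix B assume "h z < B"
    show "\<forall>\<^sub>F t in sequentially. (SUP y\<in>{c t..b}. G t y) < B"
      using ev_le
    proof eventually_elim
      case (elim t)
      then have "(SUP y\<in>{c t..b}. G t y) \<le> h z"
        by (intro cSUP_least) auto
      then show ?case using \<open>h z < B\<close> by linarith
    qed
  next
    fix B assume "B < h z"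
    \<comment> \<open>The maximiser z may be 0, so approach it from inside (0, b].\<close>
    define s where "s i = z + (b - z) / real (Suc i)" for i
    have s: "s i \<in> {0<..b}" for i
    proof -
      have "(b - z) / real (Suc i) \<le> (b - z) / 1"
        using z by (intro divide_left_mono) auto
      moreover have "0 < s i"
        using z assms(2) by (cases "z = 0") (auto simp: s_def intro: add_pos_nonneg)
      ultimately show ?thesis by (simp add: s_def)
    qed
    have "s \<longlonglongrightarrow> z + 0"
      unfolding s_def by (intro tendsto_intros) real_asymp
    then have "(\<lambda>i. h (s i)) \<longlonglongrightarrow> h z"
      using s z by (intro continuous_on_tendsto_compose[OF assms(1)]) (auto simp: less_imp_le)
    then obtain y where y: "y \<in> {0<..b}" "B < h y"
      using order_tendstoD(1)[OF _ \<open>B < h z\<close>] s by (metis eventually_sequentially order_refl)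
    have "\<forall>\<^sub>F t in sequentially. c t < y"
      using order_tendstoD(2)[OF c(2)] y by auto
    moreover have "\<forall>\<^sub>F t in sequentially. B < G t y"
      using order_tendstoD(1)[OF G_tendsto[OF y(1)] y(2)] .
    ultimately show "\<forall>\<^sub>F t in sequentially. B < (SUP y\<in>{c t..b}. G t y)"
      using ev_le
    proof eventually_elim
      case (elim t)
      then have "G t y \<le> (SUP y\<in>{c t..b}. G t y)"
        using y by (intro cSUP_upper bdd_aboveI2) auto
      then show ?case using elim by linarith
    qed
  qed
qed

lemma g_interval_subset: "{real m * real k / real t..real m} \<subseteq> {0..real m}"
  by (intro atLeastatMost_subset_iff[THEN iffD2] disjI2) simp

lemma gterm_le_gterm_limit_on_interval:
  assumes "m \<le> k" "k \<le> t" "y \<in> {real m * real k / real t..real m}"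
  shows "gterm m t k y \<le> gterm_limit m k y"
  using assms subsetD[OF g_interval_subset assms(3)] by (intro gterm_le_gterm_limit) auto

lemma g_tendsto_SUP_gterm_limit:
  assumes "0 < m" "m \<le> k"
  shows "(\<lambda>t. g m t k) \<longlonglongrightarrow> (SUP y\<in>{0..real m}. gterm_limit m k y)"
  unfolding g_def
proof (rule tendsto_SUP_shrinking_interval[OF continuous_gterm_limit])
  show "(\<lambda>t. real m * real k / real t) \<longlonglongrightarrow> 0" by real_asymp
  show "\<forall>\<^sub>F t in sequentially. \<forall>y\<in>{real m * real k / real t..real m}. gterm m t k y \<le> gterm_limit m k y"
    using eventually_ge_at_top[of k] by eventually_elim (use assms gterm_le_gterm_limit_on_interval in blast)
qed (use assms gterm_tendsto_gterm_limit in auto)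

lemma SUP_gterm_limit_le:
  assumes "0 < m" "m \<le> k"
  shows "(SUP y\<in>{0..real m}. gterm_limit m k y) \<le> min (exp 1) (1 + real k / (real k - real m + 1)) ^ m"
  using assms gterm_limit_le_exp gterm_limit_le_ratio by (intro cSUP_least) (auto simp: min_def)

lemma g_le_SUP_gterm_limit:
  assumes "0 < m" "m \<le> k" "k \<le> n"
  shows "g m n k \<le> (SUP y\<in>{0..real m}. gterm_limit m k y)"
  unfolding g_def
proof (rule cSUP_mono)
  show "{real m * real k / real n..real m} \<noteq> {}"
    using assms by (auto simp: divide_le_eq)
  show "bdd_above (gterm_limit m k ` {0..real m})"
    using assms gterm_limit_le_exp by (intro bdd_aboveI2[where M = "exp 1 ^ m"]) auto
  fix y assume y: "y \<in> {real m * real k / real n..real m}"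
  show "\<exists>y'\<in>{0..real m}. gterm m n k y \<le> gterm_limit m k y'"
    using assms y subsetD[OF g_interval_subset y] by (intro bexI[of _ y] gterm_le_gterm_limit_on_interval)
qed

theorem proposition2:
  fixes m n k :: nat
  assumes "0 < m" "m \<le> k" "k \<le> n"
  shows "\<exists>L. (\<lambda>t. root m (g m t k)) \<longlonglongrightarrow> L
           \<and> root m (g m n k) \<le> L
           \<and> L \<le> min (exp 1) (1 + real k / (real k - real m + 1))"
proof -
  define H where "H = (SUP y\<in>{0..real m}. gterm_limit m k y)"
  define M where "M = min (exp 1) (1 + real k / (real k - real m + 1))"
  have "0 \<le> M" unfolding M_def using assms by (auto simp: min_def)
  moreover have "H \<le> M ^ m"
    unfolding H_def M_def using SUP_gterm_limit_le[OF assms(1,2)] .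
  ultimately have "root m H \<le> M"
    using assms real_root_le_mono[of m H "M ^ m"] by (simp add: real_root_power_cancel)
  moreover have "(\<lambda>t. root m (g m t k)) \<longlonglongrightarrow> root m H"
    unfolding H_def using g_tendsto_SUP_gterm_limit[OF assms(1,2)] by (rule tendsto_real_root)
  moreover have "root m (g m n k) \<le> root m H"
    unfolding H_def using g_le_SUP_gterm_limit[OF assms] assms by (intro real_root_le_mono) auto
  ultimately show ?thesis
    unfolding M_def by blast
qed

end
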